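(* For all integers $k,r\geq 1$, $AW(k;r)$ exists (i.e., is finite) and satisfies $AW(k;r)\le k^{2r-1}$.
   Context: A sequence of positive integers $w_1<w_2<\dots<w_n$ is an ascending wave if $w_{i+1}-w_i \geq w_i-w_{i-1}$ for $2\le i\le n-1$. For positive integers $k,r$, $AW(k;r)$ denotes the least positive integer $N$ such that every $r$-coloring of $\{1,2,\dots,N\}$ contains a $k$-term monochromatic ascending wave. *)

theory Defs
  imports Main
begin

definition ascending_wave :: "(nat \<Rightarrow> nat) \<Rightarrow> nat \<Rightarrow> bool" where
  "ascending_wave w k \<longleftrightarrow>
     (\<forall>i<k. 0 < w i) \<and>
     (\<forall>i. i + 1 < k \<longrightarrow> w i < w (i + 1)) \<and>
     (\<forall>i. i + 2 < k \<longrightarrow> w (i + 1) - w i \<le> w (i + 2) - w (i + 1))"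

definition AW_property :: "nat \<Rightarrow> nat \<Rightarrow> nat \<Rightarrow> bool" where
  "AW_property k r N \<longleftrightarrow>
     (\<forall>c :: nat \<Rightarrow> nat. (\<forall>x\<in>{1..N}. c x < r) \<longrightarrow>
        (\<exists>w. ascending_wave w k \<and> (\<forall>i<k. w i \<in> {1..N}) \<and>
             (\<exists>col. \<forall>i<k. c (w i) = col)))"

definition AW :: "nat \<Rightarrow> nat \<Rightarrow> nat" where
  "AW k r = (LEAST N. 0 < N \<and> AW_property k r N)"

end

theory Submission
  imports Defs
begin

text \<open>Induction on the number of colours, with \<open>M = k^(2r-1)\<close> serving \<open>r\<close> colours.
  Given \<open>r + 1\<close> colours on an interval of length \<open>M k\<^sup>2\<close>, either some block of \<open>M\<close>
  consecutive integers misses the last colour, and the induction hypothesis applies inside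
  that block, or the last colour meets every such block. In the latter case a wave is built
  greedily: after a term \<open>p\<close> reached with gap \<open>g\<close>, the next term is taken from the block
  \<open>{p+g+1..p+g+M}\<close>. Each gap exceeds the previous one by at most \<open>M\<close>, so the \<open>n\<close>-th gap is
  at most \<open>n M\<close> and \<open>k\<close> terms fit into length \<open>M k\<^sup>2\<close>.\<close>

definition meets_every_block :: "(nat \<Rightarrow> nat) \<Rightarrow> nat \<Rightarrow> nat \<Rightarrow> nat \<Rightarrow> nat \<Rightarrow> bool" where
  "meets_every_block c col M a L \<longleftrightarrow>
     (\<forall>b. a \<le> b \<longrightarrow> b + M \<le> a + L \<longrightarrow> (\<exists>x. b < x \<and> x \<le> b + M \<and> c x = col))"

lemma meets_every_blockD:
  assumes "meets_every_block c col M a L" and "a \<le> b" and "b + M \<le> a + L"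
  obtains x where "b < x" and "x \<le> b + M" and "c x = col"
  using assms unfolding meets_every_block_def by blast

lemma ascending_wave_consecutive: "ascending_wave (\<lambda>i. a + 1 + i) k"
  by (simp add: ascending_wave_def)

lemma ascending_wave_mono:
  assumes wave: "ascending_wave w n" and "i \<le> j" and "j < n"
  shows "w i \<le> w j"
  using assms(2,3)
proof (induction j)
  case 0
  then show ?case by simp
next
  case (Suc j)
  show ?case
  proof (cases "i = Suc j")
    case False
    then have "w i \<le> w j" using Suc by simp
    also have "w j < w (Suc j)" using wave Suc.prems(2) unfolding ascending_wave_def by simp
    finally show ?thesis by simp
  qed simp
qed

lemma ascending_wave_extend:
  assumes wave: "ascending_wave w n" and "0 < n" and last: "w (n - 1) < q"
    and gap: "w (n - 1) - w (n - 2) \<le> q - w (n - 1)"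
  shows "ascending_wave (w(n := q)) (Suc n)"
proof -
  have pos: "\<forall>i<n. 0 < w i" and incr: "\<forall>i. i + 1 < n \<longrightarrow> w i < w (i + 1)"
    and convex: "\<forall>i. i + 2 < n \<longrightarrow> w (i + 1) - w i \<le> w (i + 2) - w (i + 1)"
    using wave unfolding ascending_wave_def by auto
  have "0 < (w(n := q)) i" if "i < Suc n" for i
    using that pos last by (cases "i = n") auto
  moreover have "(w(n := q)) i < (w(n := q)) (i + 1)" if "i + 1 < Suc n" for i
  proof (cases "i + 1 = n")
    case True
    then show ?thesis using last by auto
  next
    case False
    then show ?thesis using that incr by auto
  qed
  moreover have "(w(n := q)) (i + 1) - (w(n := q)) i \<le> (w(n := q)) (i + 2) - (w(n := q)) (i + 1)"
    if "i + 2 < Suc n" for i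
  proof (cases "i + 2 = n")
    case True
    then have upd: "(w(n := q)) i = w (n - 2)" "(w(n := q)) (i + 1) = w (n - 1)"
      "(w(n := q)) (i + 2) = q" by auto
    show ?thesis unfolding upd using gap .
  next
    case False
    then show ?thesis using that convex by auto
  qed
  ultimately show ?thesis unfolding ascending_wave_def by blast
qed

text \<open>For \<open>n = 0\<close> the gap \<open>w n - w (n - 1)\<close> is \<open>0\<close>, so the second term is sought right after
  the first.\<close>

lemma greedy_wave:
  assumes blocks: "meets_every_block c col M a L" and len: "M * k\<^sup>2 \<le> L"
    and "Suc n \<le> k"
  shows "\<exists>w. ascending_wave w (Suc n) \<and> (\<forall>i\<le>n. c (w i) = col) \<and> a < w 0 \<and>
    w n - w (n - 1) \<le> M * n \<and> w n \<le> a + M * (n + 1)\<^sup>2"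
  using \<open>Suc n \<le> k\<close>
proof (induction n)
  case 0
  have "M \<le> M * k\<^sup>2" using 0 by (simp add: Suc_le_eq)
  then have "a + M \<le> a + L" using order.trans[OF _ len] by simp
  then obtain x where "a < x" "x \<le> a + M" "c x = col"
    using meets_every_blockD[OF blocks, of a] by auto
  then show ?case
    by (intro exI[of _ "\<lambda>_. x"]) (auto simp: ascending_wave_def)
next
  case (Suc n)
  then obtain w where wave: "ascending_wave w (Suc n)" and colour: "\<forall>i\<le>n. c (w i) = col"
    and start: "a < w 0" and gap: "w n - w (n - 1) \<le> M * n"
    and last: "w n \<le> a + M * (n + 1)\<^sup>2"
    by auto
  define g where "g = w n - w (n - 1)"
  have "a < w n" using start ascending_wave_mono[OF wave, of 0 n] by simp
  have "w n + g + M \<le> a + M * (n + 1)\<^sup>2 + M * n + M"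
    using last gap unfolding g_def by (intro add_mono order.refl)
  also have "\<dots> = a + M * ((n + 1) * (n + 2))" by (simp add: algebra_simps power2_eq_square)
  finally have reach: "w n + g + M \<le> a + M * ((n + 1) * (n + 2))" .
  have "(n + 1) * (n + 2) \<le> k\<^sup>2"
    using Suc.prems mult_le_mono[of "n + 1" k "n + 2" k] by (simp add: power2_eq_square)
  then have window: "w n + g + M \<le> a + L"
    using reach len mult_le_mono2[of "(n + 1) * (n + 2)" "k\<^sup>2" M] by linarith
  have "a \<le> w n + g" using \<open>a < w n\<close> by simp
  then obtain q where q: "w n + g < q" "q \<le> w n + g + M" "c q = col"
    using meets_every_blockD[OF blocks _ window] by blast
  have "ascending_wave (w(Suc n := q)) (Suc (Suc n))"
    using ascending_wave_extend[OF wave] q(1) unfolding g_def by simp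
  moreover have "(w(Suc n := q)) (Suc n) \<le> a + M * (Suc n + 1)\<^sup>2"
  proof -
    have "q \<le> a + M * ((n + 1) * (n + 2))" using order.trans[OF q(2) reach] .
    also have "\<dots> \<le> a + M * (Suc n + 1)\<^sup>2"
      by (intro add_left_mono mult_left_mono) (simp_all add: power2_eq_square)
    finally show ?thesis by simp
  qed
  moreover have "(w(Suc n := q)) (Suc n) - (w(Suc n := q)) (Suc n - 1) \<le> M * Suc n"
    using q(2) gap unfolding g_def by simp
  moreover have "\<forall>i\<le>Suc n. c ((w(Suc n := q)) i) = col" using colour q(3) by (simp add: le_Suc_eq)
  moreover have "a < (w(Suc n := q)) 0" using start by simp
  ultimately show ?case by blast
qed

lemma monochromatic_wave_if_meets_every_block:
  assumes blocks: "meets_every_block c col M a L" and len: "M * k\<^sup>2 \<le> L"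
  shows "\<exists>w. ascending_wave w k \<and> (\<forall>i<k. w i \<in> {a+1..a+L} \<and> c (w i) = col)"
proof (cases k)
  case 0
  then show ?thesis by (simp add: ascending_wave_def)
next
  case (Suc n)
  then obtain w where wave: "ascending_wave w k" and colour: "\<forall>i\<le>n. c (w i) = col"
    and start: "a < w 0" and last: "w n \<le> a + M * k\<^sup>2"
    using greedy_wave[OF blocks len, of n] by auto
  have "w i \<in> {a+1..a+L}" if "i < k" for i
    using that Suc start last len ascending_wave_mono[OF wave, of 0 i]
      ascending_wave_mono[OF wave, of i n] by auto
  then show ?thesis using wave colour Suc by (intro exI[of _ w]) auto
qed

lemma monochromatic_wave_in_interval:
  assumes "1 \<le> r" and "k ^ (2 * r - 1) \<le> L" and "\<forall>x\<in>{a+1..a+L}. c x < r"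
  shows "\<exists>w col. ascending_wave w k \<and> (\<forall>i<k. w i \<in> {a+1..a+L} \<and> c (w i) = col)"
  using assms
proof (induction r arbitrary: a L rule: nat_induct_at_least)
  case base
  then show ?case
    using ascending_wave_consecutive[of a k] by (intro exI[of _ "\<lambda>i. a + 1 + i"] exI[of _ 0]) auto
next
  case (Suc r)
  define M where "M = k ^ (2 * r - 1)"
  have "2 * Suc r - 1 = (2 * r - 1) + 2" using Suc.hyps by simp
  then have "k ^ (2 * Suc r - 1) = M * k\<^sup>2" unfolding M_def by (simp only: power_add)
  then have len: "M * k\<^sup>2 \<le> L" using Suc.prems(1) by simp
  show ?case
  proof (cases "meets_every_block c r M a L")
    case True
    then show ?thesis using monochromatic_wave_if_meets_every_block[OF True len] by blast
  next
    case False
    then obtain b where "a \<le> b" "b + M \<le> a + L" and avoids: "\<forall>x. b < x \<and> x \<le> b + M \<longrightarrow> c x \<noteq> r"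
      unfolding meets_every_block_def by auto
    have "c x < r" if "x \<in> {b+1..b+M}" for x
    proof -
      have "c x < Suc r" using that \<open>a \<le> b\<close> \<open>b + M \<le> a + L\<close> Suc.prems(2) by auto
      moreover have "c x \<noteq> r" using that avoids by auto
      ultimately show ?thesis by simp
    qed
    then obtain w col where "ascending_wave w k" "\<forall>i<k. w i \<in> {b+1..b+M} \<and> c (w i) = col"
      using Suc.IH[of M b] M_def by blast
    then show ?thesis using \<open>a \<le> b\<close> \<open>b + M \<le> a + L\<close> by (intro exI[of _ w] exI[of _ col]) auto
  qed
qed

lemma AW_property_pow:
  assumes "1 \<le> r"
  shows "AW_property k r (k ^ (2 * r - 1))"
  unfolding AW_property_def
proof (intro allI impI)
  fix c :: "nat \<Rightarrow> nat"
  assume "\<forall>x\<in>{1..k ^ (2 * r - 1)}. c x < r"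
  then obtain w col where "ascending_wave w k" "\<forall>i<k. w i \<in> {1..k ^ (2 * r - 1)} \<and> c (w i) = col"
    using monochromatic_wave_in_interval[OF assms, of k "k ^ (2 * r - 1)" 0 c] by auto
  then show "\<exists>w. ascending_wave w k \<and> (\<forall>i<k. w i \<in> {1..k ^ (2 * r - 1)}) \<and> (\<exists>col. \<forall>i<k. c (w i) = col)"
    by blast
qed

theorem mainTheorem2:
  fixes k r :: nat
  assumes "1 \<le> k" and "1 \<le> r"
  shows "(\<exists>N. 0 < N \<and> AW_property k r N) \<and> AW k r \<le> k ^ (2 * r - 1)"
proof -
  have "0 < k ^ (2 * r - 1)" using assms(1) by simp
  moreover have "AW_property k r (k ^ (2 * r - 1))" using AW_property_pow[OF assms(2)] .
  ultimately show ?thesis unfolding AW_def by (blast intro: Least_le)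
qed

end
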